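(* Let $E,F$ be effect algebras and let $[E,F]$ denote the set of all generalized effect algebra homomorphisms $E\to F$ (maps $f$ with $f(0)=0$ such that $a\perp b$ implies $f(a)\perp f(b)$ and $f(a\oplus b)=f(a)\oplus f(b)$). For $f,g\in[E,F]$: (i) if $f(a)\perp g(a)$ for all $a\in E$, then the pointwise orthosum $f\oplus g\colon a\mapsto f(a)\oplus g(a)$ belongs to $[E,F]$; (ii) if $f\leq g$ pointwise, then the pointwise difference $g\ominus f\colon a\mapsto g(a)\ominus f(a)$ belongs to $[E,F]$. Consequently, $[E,F]$ with the pointwise partial operation $\oplus$ and the zero map as $0$ is a generalized effect algebra whose algebraic ordering ($f\le g$ iff $g=f\oplus k$ for some $k\in[E,F]$) coincides with the pointwise ordering.
   Context: An effect algebra is a partial algebra $(E;\oplus,',0,1)$ with $\oplus$ commutative and associative (as Kleene identities), $a\oplus b=1$ iff $b=a'$, and $a\oplus 1$ defined iff $a=0$. Write $a\perp b$ if $a\oplus b$ is defined; $a\le b$ iff $a\oplus c=b$ for some $c$; $b\ominus a$ denotes the unique such $c$ (cancellation holds). A generalized effect algebra is a partial commutative monoid $(E;\oplus,0)$ satisfying cancellation ($a\oplus b=a\oplus c\Rightarrow b=c$) and positivity ($a\oplus b=0\Rightarrow a=0$). *)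

theory Defs
  imports Main
begin

text \<open>Partial binary operations are modelled as option-valued functions:
  op a b = None means a and b are not orthogonal; op a b = Some c means a oplus b = c.\<close>

definition ortho :: "('a \<Rightarrow> 'a \<Rightarrow> 'a option) \<Rightarrow> 'a \<Rightarrow> 'a \<Rightarrow> bool" where
  "ortho op a b \<longleftrightarrow> op a b \<noteq> None"

definition effect_algebra ::
  "('a \<Rightarrow> 'a \<Rightarrow> 'a option) \<Rightarrow> ('a \<Rightarrow> 'a) \<Rightarrow> 'a \<Rightarrow> 'a \<Rightarrow> bool" where
  "effect_algebra op cmp z u \<longleftrightarrow>
     (\<forall>a b. op a b = op b a) \<and>
     (\<forall>a b c. Option.bind (op a b) (\<lambda>x. op x c) = Option.bind (op b c) (\<lambda>y. op a y)) \<and>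
     (\<forall>a b. op a b = Some u \<longleftrightarrow> b = cmp a) \<and>
     (\<forall>a. op a u \<noteq> None \<longleftrightarrow> a = z)"

definition pa_le :: "('a \<Rightarrow> 'a \<Rightarrow> 'a option) \<Rightarrow> 'a \<Rightarrow> 'a \<Rightarrow> bool" where
  "pa_le op a b \<longleftrightarrow> (\<exists>c. op a c = Some b)"

definition pa_minus :: "('a \<Rightarrow> 'a \<Rightarrow> 'a option) \<Rightarrow> 'a \<Rightarrow> 'a \<Rightarrow> 'a" where
  "pa_minus op b a = (THE c. op a c = Some b)"

definition gen_effect_algebra ::
  "'c set \<Rightarrow> ('c \<Rightarrow> 'c \<Rightarrow> 'c option) \<Rightarrow> 'c \<Rightarrow> bool" where
  "gen_effect_algebra S op z \<longleftrightarrow>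
     z \<in> S \<and>
     (\<forall>a\<in>S. \<forall>b\<in>S. \<forall>c. op a b = Some c \<longrightarrow> c \<in> S) \<and>
     (\<forall>a\<in>S. \<forall>b\<in>S. op a b = op b a) \<and>
     (\<forall>a\<in>S. \<forall>b\<in>S. \<forall>c\<in>S.
        Option.bind (op a b) (\<lambda>x. op x c) = Option.bind (op b c) (\<lambda>y. op a y)) \<and>
     (\<forall>a\<in>S. op z a = Some a) \<and>
     (\<forall>a\<in>S. \<forall>b\<in>S. \<forall>c\<in>S. op a b \<noteq> None \<and> op a b = op a c \<longrightarrow> b = c) \<and>
     (\<forall>a\<in>S. \<forall>b\<in>S. op a b = Some z \<longrightarrow> a = z)"

definition gea_hom ::
  "('a \<Rightarrow> 'a \<Rightarrow> 'a option) \<Rightarrow> 'a \<Rightarrow> ('b \<Rightarrow> 'b \<Rightarrow> 'b option) \<Rightarrow> 'b \<Rightarrow> ('a \<Rightarrow> 'b) \<Rightarrow> bool" where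
  "gea_hom opE zE opF zF f \<longleftrightarrow>
     f zE = zF \<and> (\<forall>a b c. opE a b = Some c \<longrightarrow> opF (f a) (f b) = Some (f c))"

definition homs ::
  "('a \<Rightarrow> 'a \<Rightarrow> 'a option) \<Rightarrow> 'a \<Rightarrow> ('b \<Rightarrow> 'b \<Rightarrow> 'b option) \<Rightarrow> 'b \<Rightarrow> ('a \<Rightarrow> 'b) set" where
  "homs opE zE opF zF = {f. gea_hom opE zE opF zF f}"

definition fun_sum :: "('b \<Rightarrow> 'b \<Rightarrow> 'b option) \<Rightarrow> ('a \<Rightarrow> 'b) \<Rightarrow> ('a \<Rightarrow> 'b) \<Rightarrow> ('a \<Rightarrow> 'b) option" where
  "fun_sum opF f g =
     (if \<forall>a. opF (f a) (g a) \<noteq> None then Some (\<lambda>a. the (opF (f a) (g a))) else None)"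

end

(*
  A pointwise
  sum is defined exactly when it is defined everywhere, so the Kleene associativity law lifts
  argument by argument. The homomorphisms contain the zero map and are closed under pointwise
  sums and differences, both by the interchange law (a + b) + (c + d) = (a + c) + (b + d)
  (plus cancellation for differences). Hence they form a sub-algebra, and the pointwise
  difference g - f witnesses that pointwise order is algebraic order.
*)

theory Submission imports Defs begin

locale partial_comm_semigroup =
  fixes op :: "'a \<Rightarrow> 'a \<Rightarrow> 'a option"
  assumes commute: "op a b = op b a"
    and assoc: "Option.bind (op a b) (\<lambda>x. op x c) = Option.bind (op b c) (op a)"
begin

lemma assoc_left:
  assumes "op a b = Some x" "op x c = Some y"
  shows "\<exists>w. op b c = Some w \<and> op a w = Some y"
  using assoc[of a b c] assms by (cases "op b c") auto

lemma assoc_right: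
  assumes "op b c = Some w" "op a w = Some y"
  shows "\<exists>x. op a b = Some x \<and> op x c = Some y"
  using assoc[of a b c] assms by (cases "op a b") auto

lemma interchange:
  assumes "op a b = Some x" "op c d = Some y" "op x y = Some s"
  shows "\<exists>p q. op a c = Some p \<and> op b d = Some q \<and> op p q = Some s"
proof -
  obtain w where w: "op b y = Some w" "op a w = Some s"
    using assoc_left assms(1,3) by blast
  obtain t where t: "op c b = Some t" "op t d = Some w"
    using assoc_right[OF assms(2) w(1)] commute by metis
  obtain q where q: "op b d = Some q" "op c q = Some w"
    using assoc_left[OF t] by blast
  show ?thesis
    using assoc_right[OF q(2) w(2)] q(1) by blast
qed

end

locale effect_alg = partial_comm_semigroup op for op :: "'a \<Rightarrow> 'a \<Rightarrow> 'a option" +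
  fixes cmp :: "'a \<Rightarrow> 'a" and z u :: 'a
  assumes sum_unit_iff: "op a b = Some u \<longleftrightarrow> b = cmp a"
    and ortho_unit_iff: "op a u \<noteq> None \<longleftrightarrow> a = z"
begin

lemma compl_compl: "cmp (cmp a) = a"
proof -
  have "op (cmp a) a = Some u"
    using sum_unit_iff[of a "cmp a"] by (simp add: commute)
  then show ?thesis
    by (simp add: sum_unit_iff)
qed

lemma unit_zero: "op u z = Some u"
proof -
  have "op (cmp u) u = Some u"
    using sum_unit_iff[of u "cmp u"] by (simp add: commute)
  then have "cmp u = z"
    using ortho_unit_iff[of "cmp u"] by simp
  then show ?thesis
    using sum_unit_iff[of u z] by simp
qed

lemma zero_right: "op a z = Some a"
proof -
  have "op (cmp a) a = Some u"
    by (simp add: sum_unit_iff compl_compl)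
  then obtain w where "op a z = Some w" "op (cmp a) w = Some u"
    using assoc_left unit_zero by blast
  then show ?thesis
    by (simp add: sum_unit_iff compl_compl)
qed

text \<open>In an effect algebra a summand is recovered from the sum by \<open>b = (x' \<oplus> a)'\<close>.\<close>

lemma summand_eq_compl:
  assumes "op a b = Some x"
  obtains w where "op (cmp x) a = Some w" "b = cmp w"
proof -
  obtain v where v: "op b (cmp x) = Some v" "op a v = Some u"
    using assoc_left[OF assms] sum_unit_iff by blast
  have "op v a = Some u"
    using v(2) by (simp add: sum_unit_iff compl_compl)
  then obtain w where w: "op (cmp x) a = Some w" "op b w = Some u"
    using assoc_left v(1) by blast
  have "b = cmp w"
    using w(2) sum_unit_iff[of w b] by (simp add: commute)
  with w(1) show thesis
    by (rule that)
qed

lemma cancel: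
  assumes "op a b = Some x" "op a c = Some x"
  shows "b = c"
proof -
  obtain w where "op (cmp x) a = Some w" "b = cmp w"
    using summand_eq_compl[OF assms(1)] .
  moreover obtain w' where "op (cmp x) a = Some w'" "c = cmp w'"
    using summand_eq_compl[OF assms(2)] .
  ultimately show ?thesis
    by simp
qed

lemma positive:
  assumes "op a b = Some z"
  shows "a = z"
proof -
  have "op z u = Some u"
    using unit_zero by (simp add: commute)
  then obtain w where "op b u = Some w"
    using assoc_left[OF assms] by blast
  then have "b = z"
    using ortho_unit_iff by blast
  then show ?thesis
    using assms zero_right by simp
qed

end

lemma effect_algebra_imp_effect_alg:
  "effect_algebra op cmp z u \<Longrightarrow> effect_alg op cmp z u"
  unfolding effect_algebra_def effect_alg_def effect_alg_axioms_def partial_comm_semigroup_def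
  by blast

locale gen_effect_alg = partial_comm_semigroup op for op :: "'a \<Rightarrow> 'a \<Rightarrow> 'a option" +
  fixes z :: 'a
  assumes zero_left: "op z a = Some a"
    and cancel: "op a b = Some x \<Longrightarrow> op a c = Some x \<Longrightarrow> b = c"
    and positive: "op a b = Some z \<Longrightarrow> a = z"

sublocale effect_alg \<subseteq> gen_effect_alg op z
  using zero_right commute cancel positive by unfold_locales metis+

lemma gen_effect_alg_iff: "gen_effect_alg op z \<longleftrightarrow> gen_effect_algebra UNIV op z"
  unfolding gen_effect_alg_def gen_effect_alg_axioms_def partial_comm_semigroup_def
    gen_effect_algebra_def
  by auto metis+

lemma gen_effect_algebra_subset:
  assumes "gen_effect_algebra S op z" "T \<subseteq> S" "z \<in> T"
    and "\<And>a b c. a \<in> T \<Longrightarrow> b \<in> T \<Longrightarrow> op a b = Some c \<Longrightarrow> c \<in> T"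
  shows "gen_effect_algebra T op z"
  using assms unfolding gen_effect_algebra_def Ball_def by (meson subsetD)

definition lift_option_fun :: "('a \<Rightarrow> 'b option) \<Rightarrow> ('a \<Rightarrow> 'b) option" where
  "lift_option_fun p = (if \<forall>x. p x \<noteq> None then Some (\<lambda>x. the (p x)) else None)"

lemma lift_option_fun_eq_Some: "lift_option_fun p = Some h \<longleftrightarrow> (\<forall>x. p x = Some (h x))"
proof
  assume "lift_option_fun p = Some h"
  then show "\<forall>x. p x = Some (h x)"
    unfolding lift_option_fun_def by (metis option.collapse option.distinct(1) option.inject)
next
  assume "\<forall>x. p x = Some (h x)"
  then show "lift_option_fun p = Some h"
    unfolding lift_option_fun_def by simp
qed

lemma lift_option_fun_eq_None: "lift_option_fun p = None \<longleftrightarrow> (\<exists>x. p x = None)"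
  unfolding lift_option_fun_def by simp

lemma bind_lift_option_fun:
  "Option.bind (lift_option_fun p) (\<lambda>h. lift_option_fun (\<lambda>x. q x (h x)))
     = lift_option_fun (\<lambda>x. Option.bind (p x) (q x))"
proof (cases "lift_option_fun p")
  case None
  then obtain x where "p x = None"
    by (auto simp: lift_option_fun_eq_None)
  then have "lift_option_fun (\<lambda>x. Option.bind (p x) (q x)) = None"
    by (metis bind.simps(1) lift_option_fun_eq_None)
  with None show ?thesis
    by simp
next
  case (Some h)
  moreover from Some have "p x = Some (h x)" for x
    by (simp add: lift_option_fun_eq_Some)
  ultimately show ?thesis
    by simp
qed

lemma fun_sum_eq_lift: "fun_sum op f g = lift_option_fun (\<lambda>x. op (f x) (g x))"
  unfolding fun_sum_def lift_option_fun_def ..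

lemma fun_sum_eq_Some: "fun_sum op f g = Some h \<longleftrightarrow> (\<forall>x. op (f x) (g x) = Some (h x))"
  unfolding fun_sum_eq_lift lift_option_fun_eq_Some ..

lemma partial_comm_semigroup_fun_sum:
  fixes op :: "'a \<Rightarrow> 'a \<Rightarrow> 'a option"
  assumes "partial_comm_semigroup op"
  shows "partial_comm_semigroup (fun_sum op)"
proof
  interpret partial_comm_semigroup op by fact
  fix a b c :: "'b \<Rightarrow> 'a"
  show "fun_sum op a b = fun_sum op b a"
    unfolding fun_sum_eq_lift by (subst commute) (rule refl)
  show "Option.bind (fun_sum op a b) (\<lambda>x. fun_sum op x c) = Option.bind (fun_sum op b c) (fun_sum op a)"
  proof -
    have "Option.bind (fun_sum op a b) (\<lambda>h. fun_sum op h c)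
        = lift_option_fun (\<lambda>x. Option.bind (op (a x) (b x)) (\<lambda>y. op y (c x)))"
      unfolding fun_sum_eq_lift by (rule bind_lift_option_fun[where q = "\<lambda>x y. op y (c x)"])
    also have "\<dots> = lift_option_fun (\<lambda>x. Option.bind (op (b x) (c x)) (op (a x)))"
      by (simp add: assoc)
    also have "\<dots> = Option.bind (fun_sum op b c) (fun_sum op a)"
      unfolding fun_sum_eq_lift by (rule bind_lift_option_fun[where q = "\<lambda>x. op (a x)", symmetric])
    finally show ?thesis .
  qed
qed

context gen_effect_alg
begin

lemma gen_effect_alg_fun_sum: "gen_effect_alg (fun_sum op) (\<lambda>_. z)"
proof (intro gen_effect_alg.intro gen_effect_alg_axioms.intro)
  show "partial_comm_semigroup (fun_sum op)"
    by (rule partial_comm_semigroup_fun_sum) unfold_locales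
qed (auto simp: fun_sum_eq_Some fun_eq_iff zero_left intro: cancel positive)

lemma pa_minus_eq: "op a c = Some b \<Longrightarrow> pa_minus op b a = c"
  unfolding pa_minus_def using cancel by blast

lemma add_pa_minus: "pa_le op a b \<Longrightarrow> op a (pa_minus op b a) = Some b"
  unfolding pa_le_def using pa_minus_eq by metis

lemma hom_zero: "gea_hom opE zE op z (\<lambda>_. z)"
  unfolding gea_hom_def by (simp add: zero_left)

lemma hom_pointwise_sum:
  assumes f: "gea_hom opE zE op z f" and g: "gea_hom opE zE op z g"
    and h: "\<And>a. op (f a) (g a) = Some (h a)"
  shows "gea_hom opE zE op z h"
  unfolding gea_hom_def
proof (intro conjI allI impI)
  have "op z z = Some (h zE)"
    using h[of zE] f g unfolding gea_hom_def by simp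
  then show "h zE = z"
    using zero_left by simp
  fix a b c assume "opE a b = Some c"
  then have fc: "op (f a) (f b) = Some (f c)" and gc: "op (g a) (g b) = Some (g c)"
    using f g unfolding gea_hom_def by auto
  obtain p q where "op (f a) (g a) = Some p" "op (f b) (g b) = Some q" "op p q = Some (h c)"
    using interchange[OF fc gc h[of c]] by blast
  with h show "op (h a) (h b) = Some (h c)"
    by simp
qed

lemma hom_pointwise_diff:
  assumes f: "gea_hom opE zE op z f" and g: "gea_hom opE zE op z g"
    and h: "\<And>a. op (f a) (h a) = Some (g a)"
  shows "gea_hom opE zE op z h"
  unfolding gea_hom_def
proof (intro conjI allI impI)
  have "op z (h zE) = Some z"
    using h[of zE] f g unfolding gea_hom_def by simp
  then show "h zE = z"
    using cancel zero_left by blast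
  fix a b c assume "opE a b = Some c"
  then have fc: "op (f a) (f b) = Some (f c)" and gc: "op (g a) (g b) = Some (g c)"
    using f g unfolding gea_hom_def by auto
  obtain p q where "op (f a) (f b) = Some p" "op (h a) (h b) = Some q" "op p q = Some (g c)"
    using interchange[OF h h gc] by blast
  moreover have "op (f c) (h c) = Some (g c)"
    by (rule h)
  ultimately show "op (h a) (h b) = Some (h c)"
    using fc cancel by simp
qed

lemma homs_pointwise_sum:
  assumes "f \<in> homs opE zE op z" "g \<in> homs opE zE op z" "\<forall>a. ortho op (f a) (g a)"
  shows "(\<lambda>a. the (op (f a) (g a))) \<in> homs opE zE op z"
proof -
  have "op (f a) (g a) = Some (the (op (f a) (g a)))" for a
    using assms(3) unfolding ortho_def by simp
  from hom_pointwise_sum[OF _ _ this] show ?thesis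
    using assms(1,2) unfolding homs_def by simp
qed

lemma homs_pointwise_diff:
  assumes "f \<in> homs opE zE op z" "g \<in> homs opE zE op z" "\<forall>a. pa_le op (f a) (g a)"
  shows "(\<lambda>a. pa_minus op (g a) (f a)) \<in> homs opE zE op z"
proof -
  have "op (f a) (pa_minus op (g a) (f a)) = Some (g a)" for a
    using assms(3) by (simp add: add_pa_minus)
  from hom_pointwise_diff[OF _ _ this] show ?thesis
    using assms(1,2) unfolding homs_def by simp
qed

lemma gen_effect_algebra_homs: "gen_effect_algebra (homs opE zE op z) (fun_sum op) (\<lambda>_. z)"
proof (rule gen_effect_algebra_subset)
  show "gen_effect_algebra UNIV (fun_sum op) (\<lambda>_. z)"
    using gen_effect_alg_fun_sum by (simp add: gen_effect_alg_iff)
  show "(\<lambda>_. z) \<in> homs opE zE op z"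
    using hom_zero by (simp add: homs_def)
  fix f g h assume "f \<in> homs opE zE op z" "g \<in> homs opE zE op z" "fun_sum op f g = Some h"
  then show "h \<in> homs opE zE op z"
    unfolding homs_def fun_sum_eq_Some mem_Collect_eq by (blast intro: hom_pointwise_sum)
qed simp

lemma homs_le_iff:
  assumes f: "f \<in> homs opE zE op z" and g: "g \<in> homs opE zE op z"
  shows "(\<exists>k\<in>homs opE zE op z. fun_sum op f k = Some g) \<longleftrightarrow> (\<forall>a. pa_le op (f a) (g a))"
proof
  assume le: "\<forall>a. pa_le op (f a) (g a)"
  then have "fun_sum op f (\<lambda>a. pa_minus op (g a) (f a)) = Some g"
    by (simp add: fun_sum_eq_Some add_pa_minus)
  with homs_pointwise_diff[OF f g le] show "\<exists>k\<in>homs opE zE op z. fun_sum op f k = Some g"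
    by blast
qed (auto simp: pa_le_def fun_sum_eq_Some)

end

theorem lemma3p1:
  fixes opE :: "'a \<Rightarrow> 'a \<Rightarrow> 'a option" and cE :: "'a \<Rightarrow> 'a" and zE uE :: 'a
    and opF :: "'b \<Rightarrow> 'b \<Rightarrow> 'b option" and cF :: "'b \<Rightarrow> 'b" and zF uF :: 'b
  assumes E: "effect_algebra opE cE zE uE"
    and F: "effect_algebra opF cF zF uF"
  shows "(\<forall>f\<in>homs opE zE opF zF. \<forall>g\<in>homs opE zE opF zF.
            (\<forall>a. ortho opF (f a) (g a)) \<longrightarrow>
            (\<lambda>a. the (opF (f a) (g a))) \<in> homs opE zE opF zF)
       \<and> (\<forall>f\<in>homs opE zE opF zF. \<forall>g\<in>homs opE zE opF zF.
            (\<forall>a. pa_le opF (f a) (g a)) \<longrightarrow>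
            (\<lambda>a. pa_minus opF (g a) (f a)) \<in> homs opE zE opF zF)
       \<and> gen_effect_algebra (homs opE zE opF zF) (fun_sum opF) (\<lambda>a. zF)
       \<and> (\<forall>f\<in>homs opE zE opF zF. \<forall>g\<in>homs opE zE opF zF.
            (\<exists>k\<in>homs opE zE opF zF. fun_sum opF f k = Some g) \<longleftrightarrow> (\<forall>a. pa_le opF (f a) (g a)))"
proof -
  interpret effect_alg opF cF zF uF
    using F by (rule effect_algebra_imp_effect_alg)
  show ?thesis
    by (intro conjI ballI impI homs_pointwise_sum homs_pointwise_diff
        gen_effect_algebra_homs homs_le_iff)
qed

end
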